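(* Let $s>1$ and let $M$ be the $s\times s$ integer matrix with $M_{i,i}=M_{i,i+1}=1$ and all other entries $0$. Let $n\in\mathbb N$. For every $y\in\mathbb R^s$ with $y_s=0$ there is a unique $x\in\mathbb R^s$ with $x_1=0$ and $(M^n-\mathrm{Id})x=y$. If moreover for some $k\in\{3,\dots,s\}$ one has $y_i=0$ for all $i\ge s-k+2$, then $x_j=0$ for all $j\ge s-k+3$. Finally, there is a constant $C>0$ depending only on $s$ (not on $n$) such that whenever $\kappa>0$ and $|y_i|\le\kappa/n^{i-1}$ for $1\le i\le s-1$, the solution satisfies $|x_j|\le C\kappa/n^{j-1}$ for $2\le j\le s$.
   Context: Note $M^n_{i,i}=1$ and $M^n_{i,j}=\binom{n}{j-i}$ for $i<j$, $M^n_{i,j}=0$ for $i>j$. *)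

theory Defs
  imports "Jordan_Normal_Form.Matrix"
begin

text \<open>The s x s matrix M with M(i,i) = M(i,i+1) = 1 and all other entries 0
  (0-based indices; entries viewed in the reals).\<close>
definition M_mat :: "nat \<Rightarrow> real mat" where
  "M_mat s = mat s s (\<lambda>(i, j). if j = i \<or> j = i + 1 then 1 else 0)"

end

theory Submission
  imports Defs
begin

(* M = I + N with N the shift matrix, so M^n has the Pascal entries
   (M^n)(i,j) = C(n, j - i) for i <= j.  Hence row i of (M^n - I) x is
   row_sum n s x i = sum over i < j < s of C(n, j - i) * x_j, an upper triangular
   system whose last row vanishes and whose row i - 1 reads  n * x_i + (terms in x_l, l > i).
   Solving it from the bottom up (back substitution) gives:
     - existence of a solution with x_0 = 0 whenever y_(s-1) = 0;
     - the kernel statement "vanishing rows from r on force x_j = 0 for j > r", which yields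
       both uniqueness (r = 0, applied to a difference of solutions) and the zero-tail claim;
     - the estimate |x_j| <= 2^(s-1-j) * kappa / n^j, since the binomial coefficient of x_l in
       row j - 1 is at most n^(l-j+1), and 1 + sum_(j<l<s) 2^(s-1-l) = 2^(s-1-j). *)

lemma M_mat_carrier [simp]: "M_mat s \<in> carrier_mat s s"
  by (simp add: M_mat_def)

text \<open>Multiplying by M on the right adds column j - 1 to column j, i.e. one step of Pascal's rule.\<close>
lemma M_mat_power_index:
  assumes "i < s" "j < s"
  shows "(M_mat s ^\<^sub>m n) $$ (i, j) = (if i \<le> j then real (n choose (j - i)) else 0)"
  using assms(2)
proof (induction n arbitrary: j)
  case 0
  then show ?case using assms(1) by (simp add: M_mat_def)
next
  case (Suc n)
  let ?P = "M_mat s ^\<^sub>m n"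
  have dims: "dim_row ?P = s" "dim_col ?P = s" "dim_row (M_mat s) = s" "dim_col (M_mat s) = s"
    by (auto simp: M_mat_def)
  have "(M_mat s ^\<^sub>m Suc n) $$ (i, j) = (\<Sum>k<s. ?P $$ (i, k) * M_mat s $$ (k, j))"
    using Suc.prems assms(1) dims by (simp add: scalar_prod_def atLeast0LessThan)
  also have "\<dots> = (\<Sum>k<s. (if k = j then ?P $$ (i, k) else 0) + (if k + 1 = j then ?P $$ (i, k) else 0))"
    using Suc.prems by (intro sum.cong) (auto simp: M_mat_def)
  also have "\<dots> = ?P $$ (i, j) + (if 1 \<le> j then ?P $$ (i, j - 1) else 0)"
  proof -
    have "(\<Sum>k<s. if k + 1 = j then ?P $$ (i, k) else 0)
        = (\<Sum>k<s. if k = j - 1 \<and> 1 \<le> j then ?P $$ (i, k) else 0)"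
      by (intro sum.cong) auto
    then show ?thesis using Suc.prems by (auto simp: sum.distrib sum.delta)
  qed
  also have "\<dots> = (if i \<le> j then real (Suc n choose (j - i)) else 0)"
  proof (cases "i < j")
    case True
    then have "j - i = Suc (j - 1 - i)" "i \<le> j - 1" by auto
    then show ?thesis using Suc True by (simp del: One_nat_def add: binomial_Suc_Suc)
  qed (use Suc in auto)
  finally show ?case .
qed

text \<open>Row i of (M^n - I) x, for x given by its coordinate function.\<close>
definition row_sum :: "nat \<Rightarrow> nat \<Rightarrow> (nat \<Rightarrow> real) \<Rightarrow> nat \<Rightarrow> real" where
  "row_sum n s x i = (\<Sum>j\<in>{i<..<s}. real (n choose (j - i)) * x j)"

lemma row_sum_eq:
  assumes "x \<in> carrier_vec s" "i < s"
  shows "((M_mat s ^\<^sub>m n - 1\<^sub>m s) *\<^sub>v x) $ i = row_sum n s (($) x) i"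
proof -
  have "((M_mat s ^\<^sub>m n - 1\<^sub>m s) *\<^sub>v x) $ i =
     (\<Sum>j\<in>{0..<s}. ((if i \<le> j then real (n choose (j - i)) else 0) - (if i = j then 1 else 0)) * x $ j)"
    using assms by (simp add: scalar_prod_def M_mat_power_index)
  also have "\<dots> = (\<Sum>j\<in>{i<..<s}. real (n choose (j - i)) * x $ j)"
    by (rule sum.mono_neutral_cong_right) auto
  finally show ?thesis by (simp add: row_sum_def)
qed

lemma row_sum_pivot:
  assumes "1 \<le> j" "j < s"
  shows "row_sum n s x (j - 1) = real n * x j + (\<Sum>l\<in>{j<..<s}. real (n choose (l - (j - 1))) * x l)"
proof -
  have "{j - 1<..<s} = insert j {j<..<s}" using assms by auto
  then show ?thesis using assms by (simp add: row_sum_def)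
qed

lemma row_sum_cong: "(\<And>j. i < j \<Longrightarrow> j < s \<Longrightarrow> x j = x' j) \<Longrightarrow> row_sum n s x i = row_sum n s x' i"
  unfolding row_sum_def by (intro sum.cong) auto

lemma row_sum_diff: "row_sum n s (\<lambda>j. x j - x' j) i = row_sum n s x i - row_sum n s x' i"
  unfolding row_sum_def by (simp add: right_diff_distrib sum_subtractf)

text \<open>The last row of the system is empty; this is why y_(s-1) = 0 is needed for solvability.\<close>
lemma row_sum_last: "row_sum n s x (s - 1) = 0"
proof -
  have "{s - 1<..<s} = {}" by auto
  then show ?thesis unfolding row_sum_def by simp
qed

text \<open>Kernel of the system: if all rows from r on vanish, then x vanishes strictly above r.
  Descending induction on j, using that the pivot n is nonzero.\<close>
lemma row_sum_zero_tail:
  assumes n: "n \<ge> 1" and rows: "\<And>i. r \<le> i \<Longrightarrow> i < s \<Longrightarrow> row_sum n s x i = 0"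
  shows "r < j \<Longrightarrow> j < s \<Longrightarrow> x j = 0"
proof (induction "s - j" arbitrary: j rule: less_induct)
  case less
  have "(\<Sum>l\<in>{j<..<s}. real (n choose (l - (j - 1))) * x l) = 0"
    using less by (intro sum.neutral) auto
  then have "row_sum n s x (j - 1) = real n * x j" using row_sum_pivot[of j s n x] less.prems by simp
  moreover have "row_sum n s x (j - 1) = 0" using rows less.prems by auto
  ultimately show ?case using n by simp
qed

text \<open>Back substitution: for 1 <= t <= s one can match rows t - 1, ..., s - 2 by an x vanishing
  below t.  The new coordinate x_t is chosen to fix row t - 1; rows above it do not see x_t.\<close>
lemma back_substitution:
  assumes n: "n \<ge> 1"
  shows "1 \<le> t \<Longrightarrow> t \<le> s \<Longrightarrow>
    \<exists>x. (\<forall>j<t. x j = 0) \<and> (\<forall>i. t - 1 \<le> i \<and> i < s - 1 \<longrightarrow> row_sum n s x i = y i)"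
proof (induction "s - t" arbitrary: t)
  case 0
  then show ?case by (intro exI[of _ "\<lambda>_. 0"]) auto
next
  case (Suc m)
  then obtain x where x_low: "\<forall>j<t + 1. x j = 0"
    and x_rows: "\<forall>i. t \<le> i \<and> i < s - 1 \<longrightarrow> row_sum n s x i = y i"
  proof -
    have "m = s - (t + 1)" "t + 1 \<le> s" using Suc.hyps(2) Suc.prems by auto
    then show ?thesis using Suc(1)[of "t + 1"] that by auto
  qed
  define S where "S = (\<Sum>l\<in>{t<..<s}. real (n choose (l - (t - 1))) * x l)"
  define x' where "x' = x(t := (y (t - 1) - S) / n)"
  have "(\<Sum>l\<in>{t<..<s}. real (n choose (l - (t - 1))) * x' l) = S"
    unfolding S_def by (intro sum.cong) (auto simp: x'_def)
  then have "row_sum n s x' (t - 1) = real n * x' t + S"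
    using row_sum_pivot[of t s n x'] Suc.prems Suc.hyps(2) by simp
  then have pivot_row: "row_sum n s x' (t - 1) = y (t - 1)"
    using n by (simp add: x'_def)
  have "row_sum n s x' i = y i" if "t - 1 \<le> i" "i < s - 1" for i
  proof (cases "i = t - 1")
    case False
    then have "row_sum n s x' i = row_sum n s x i" using that by (intro row_sum_cong) (auto simp: x'_def)
    then show ?thesis using x_rows that False by auto
  qed (use pivot_row in simp)
  moreover have "\<forall>j<t. x' j = 0" using x_low by (auto simp: x'_def)
  ultimately show ?case by blast
qed

lemma geometric_weights: "j < s \<Longrightarrow> 1 + (\<Sum>l\<in>{j<..<s}. (2::real) ^ (s - 1 - l)) = 2 ^ (s - 1 - j)"
proof (induction s)
  case (Suc s)
  show ?case
  proof (cases "j = s")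
    case False
    then have js: "j < s" using Suc by simp
    have "{j<..<Suc s} = insert s {j<..<s}" using js by auto
    then have "1 + (\<Sum>l\<in>{j<..<Suc s}. (2::real) ^ (Suc s - 1 - l))
        = 2 + (\<Sum>l\<in>{j<..<s}. 2 ^ (Suc s - 1 - l))"
      by simp
    also have "\<dots> = 2 * (1 + (\<Sum>l\<in>{j<..<s}. 2 ^ (s - 1 - l)))"
      by (simp add: sum_distrib_left, intro sum.cong) (auto simp: Suc_diff_Suc simp flip: power_Suc)
    also have "\<dots> = 2 ^ (Suc s - 1 - j)"
      using Suc.IH[OF js] js by (simp add: Suc_diff_le flip: power_Suc)
    finally show ?thesis .
  qed simp
qed simp

text \<open>Since C(n, m) <= n^m, the coefficient of x_l in row i costs at most n^(l - i).\<close>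
lemma binomial_term_bound:
  fixes a B :: real
  assumes n: "n \<ge> 1" and "i \<le> l" and a: "\<bar>a\<bar> \<le> B / real n ^ l"
  shows "\<bar>real (n choose (l - i)) * a\<bar> \<le> B / real n ^ i"
proof -
  have "n choose (l - i) \<le> n ^ (l - i)"
    by (cases "l - i \<le> n") (auto simp: binomial_le_pow binomial_eq_0)
  then have coeff: "real (n choose (l - i)) \<le> real n ^ (l - i)"
    by (metis of_nat_le_iff of_nat_power)
  have "\<bar>real (n choose (l - i)) * a\<bar> \<le> real n ^ (l - i) * (B / real n ^ l)"
    unfolding abs_mult by (rule mult_mono) (use coeff a in auto)
  also have "\<dots> = B / real n ^ i"
    using n \<open>i \<le> l\<close> by (simp add: field_simps flip: power_add)
  finally show ?thesis .
qed

text \<open>Descending induction: n x_j is row j - 1 minus the higher terms, each bounded by the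
  previous lemma, and the weights add up by geometric_weights.\<close>
lemma row_sum_solution_bound:
  assumes n: "n \<ge> 1"
    and y_bound: "\<forall>i<s - 1. \<bar>y i\<bar> \<le> \<kappa> / real n ^ i"
    and rows: "\<forall>i<s - 1. row_sum n s x i = y i"
  shows "1 \<le> j \<Longrightarrow> j < s \<Longrightarrow> \<bar>x j\<bar> \<le> 2 ^ (s - 1 - j) * \<kappa> / real n ^ j"
proof (induction "s - j" arbitrary: j rule: less_induct)
  case less
  define S where "S = (\<Sum>l\<in>{j<..<s}. real (n choose (l - (j - 1))) * x l)"
  define K where "K = \<kappa> / real n ^ (j - 1)"
  have pivot: "y (j - 1) = real n * x j + S"
    using rows row_sum_pivot[of j s n x] less.prems unfolding S_def by auto
  have "\<bar>S\<bar> \<le> (\<Sum>l\<in>{j<..<s}. 2 ^ (s - 1 - l) * \<kappa> / real n ^ (j - 1))"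
    unfolding S_def
  proof (rule order_trans[OF sum_abs], intro sum_mono)
    fix l assume l: "l \<in> {j<..<s}"
    then have "\<bar>x l\<bar> \<le> 2 ^ (s - 1 - l) * \<kappa> / real n ^ l"
      using less.prems by (intro less.hyps) auto
    then show "\<bar>real (n choose (l - (j - 1))) * x l\<bar> \<le> 2 ^ (s - 1 - l) * \<kappa> / real n ^ (j - 1)"
      using l n by (intro binomial_term_bound) auto
  qed
  also have "\<dots> = (\<Sum>l\<in>{j<..<s}. (2::real) ^ (s - 1 - l)) * K"
    by (simp add: K_def sum_distrib_right sum_divide_distrib)
  finally have S_bound: "\<bar>S\<bar> \<le> (\<Sum>l\<in>{j<..<s}. (2::real) ^ (s - 1 - l)) * K" .
  have y_j: "\<bar>y (j - 1)\<bar> \<le> K"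
    using y_bound less.prems unfolding K_def by auto
  have "real n * \<bar>x j\<bar> = \<bar>y (j - 1) - S\<bar>"
    unfolding pivot by (simp add: abs_mult)
  also have "\<dots> \<le> \<bar>y (j - 1)\<bar> + \<bar>S\<bar>"
    by (rule abs_triangle_ineq4)
  also have "\<dots> \<le> (1 + (\<Sum>l\<in>{j<..<s}. (2::real) ^ (s - 1 - l))) * K"
    using y_j S_bound by (simp add: algebra_simps)
  also have "\<dots> = real n * (2 ^ (s - 1 - j) * \<kappa> / real n ^ j)"
    using geometric_weights[of j s] less.prems n
    by (simp add: K_def field_simps power_eq_if)
  finally show ?case by (rule mult_left_le_imp_le) (use n in simp)
qed

abbreviation solves :: "nat \<Rightarrow> nat \<Rightarrow> real vec \<Rightarrow> real vec \<Rightarrow> bool" where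
  "solves n s x y \<equiv> x \<in> carrier_vec s \<and> (M_mat s ^\<^sub>m n - 1\<^sub>m s) *\<^sub>v x = y"

lemma solves_rows: "solves n s x y \<Longrightarrow> i < s \<Longrightarrow> row_sum n s (($) x) i = y $ i"
  using row_sum_eq[of x s i n] by simp

lemma solution_exists:
  assumes n: "n \<ge> 1" and s: "s \<ge> 1" and y: "y \<in> carrier_vec s" "y $ (s - 1) = 0"
  shows "\<exists>x. x $ 0 = 0 \<and> solves n s x y"
proof -
  obtain f where f0: "f 0 = 0" and f_rows: "\<forall>i<s - 1. row_sum n s f i = y $ i"
    using back_substitution[OF n, of 1 s "($) y"] s by auto
  define x where "x = vec s f"
  have "(M_mat s ^\<^sub>m n - 1\<^sub>m s) *\<^sub>v x = y"
  proof (rule eq_vecI)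
    fix i assume "i < dim_vec y"
    then have i: "i < s" using y by simp
    have "row_sum n s (($) x) i = row_sum n s f i" by (intro row_sum_cong) (auto simp: x_def)
    also have "\<dots> = y $ i" using f_rows y row_sum_last i by (cases "i = s - 1") auto
    finally show "((M_mat s ^\<^sub>m n - 1\<^sub>m s) *\<^sub>v x) $ i = y $ i"
      using row_sum_eq[of x s i n] i by (simp add: x_def)
  qed (use y in simp)
  then show ?thesis using f0 s by (intro exI[of _ x]) (simp add: x_def)
qed

text \<open>Uniqueness: the difference of two solutions lies in the kernel, and its coordinate 0 vanishes.\<close>
lemma solution_unique:
  assumes n: "n \<ge> 1" and x: "solves n s x y" and x': "solves n s x' y" and "x $ 0 = x' $ 0"
  shows "x = x'"
proof -
  have dims: "dim_vec x = s" "dim_vec x' = s" using x x' by auto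
  have diff_rows: "row_sum n s (\<lambda>j. x $ j - x' $ j) i = 0" if "i < s" for i
    using solves_rows[OF x that] solves_rows[OF x' that] by (simp add: row_sum_diff)
  have "x $ j = x' $ j" if "j < s" for j
    using row_sum_zero_tail[OF n, of 0 s "\<lambda>j. x $ j - x' $ j" j] diff_rows that \<open>x $ 0 = x' $ 0\<close>
    by (cases "j = 0") auto
  then show ?thesis using dims by (intro eq_vecI) auto
qed

lemma solution_zero_tail:
  assumes n: "n \<ge> 1" and x: "solves n s x y" and y: "\<forall>i. r \<le> i \<and> i < s \<longrightarrow> y $ i = 0"
    and j: "r < j" "j < s"
  shows "x $ j = 0"
  using row_sum_zero_tail[OF n, of r s "($) x" j] solves_rows[OF x] y j by auto

lemma solution_bound:
  assumes n: "n \<ge> 1" and \<kappa>: "\<kappa> \<ge> 0" and x: "solves n s x y"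
    and y: "\<forall>i<s - 1. \<bar>y $ i\<bar> \<le> \<kappa> / real n ^ i" and j: "1 \<le> j" "j < s"
  shows "\<bar>x $ j\<bar> \<le> 2 ^ s * \<kappa> / real n ^ j"
proof -
  have "\<bar>x $ j\<bar> \<le> 2 ^ (s - 1 - j) * \<kappa> / real n ^ j"
    using row_sum_solution_bound[OF n, of s "($) y" \<kappa> "($) x" j] solves_rows[OF x] y j by auto
  also have "\<dots> \<le> 2 ^ s * \<kappa> / real n ^ j"
    using \<kappa> by (intro divide_right_mono mult_right_mono power_increasing) auto
  finally show ?thesis .
qed

theorem mainTheorem13:
  fixes s :: nat
  assumes "s > 1"
  shows "(\<forall>n::nat. n \<ge> 1 \<longrightarrow> (\<forall>y \<in> carrier_vec s. y $ (s - 1) = 0 \<longrightarrow>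
            (\<exists>!x. x \<in> carrier_vec s \<and> x $ 0 = 0 \<and> (M_mat s ^\<^sub>m n - 1\<^sub>m s) *\<^sub>v x = y)))
       \<and> (\<forall>n::nat. \<forall>k::nat. \<forall>y x. n \<ge> 1 \<and> 3 \<le> k \<and> k \<le> s
            \<and> y \<in> carrier_vec s \<and> y $ (s - 1) = 0
            \<and> x \<in> carrier_vec s \<and> x $ 0 = 0 \<and> (M_mat s ^\<^sub>m n - 1\<^sub>m s) *\<^sub>v x = y
            \<and> (\<forall>i. s - k + 2 \<le> i + 1 \<and> i < s \<longrightarrow> y $ i = 0)
            \<longrightarrow> (\<forall>j. s - k + 3 \<le> j + 1 \<and> j < s \<longrightarrow> x $ j = 0))
       \<and> (\<exists>C::real. C > 0 \<and> (\<forall>n::nat. \<forall>\<kappa>::real. \<forall>y x. n \<ge> 1 \<and> \<kappa> > 0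
            \<and> y \<in> carrier_vec s \<and> y $ (s - 1) = 0
            \<and> (\<forall>i. i < s - 1 \<longrightarrow> \<bar>y $ i\<bar> \<le> \<kappa> / real n ^ i)
            \<and> x \<in> carrier_vec s \<and> x $ 0 = 0 \<and> (M_mat s ^\<^sub>m n - 1\<^sub>m s) *\<^sub>v x = y
            \<longrightarrow> (\<forall>j. 1 \<le> j \<and> j < s \<longrightarrow> \<bar>x $ j\<bar> \<le> C * \<kappa> / real n ^ j)))"
proof (intro conjI allI impI ballI exI[of _ "2 ^ s"], goal_cases)
  case (1 n y)
  then show ?case using assms solution_exists solution_unique by (metis less_imp_le_nat)
next
  case (2 n k y x j)
  then show ?case using solution_zero_tail[where n = n and x = x and y = y and r = "s - k + 1"] by auto
next
  case 3
  then show ?case by simp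
next
  case (4 n \<kappa> y x j)
  then show ?case using solution_bound[where n = n and x = x and y = y and \<kappa> = \<kappa>] by auto
qed

end
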